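(* Let $q \ge 5$ be a prime number, $s \in \mathbb Z_q^* \setminus \{1\}$ and $2 \le k \le q-1$. Let $\mathcal A = \{1,2,\dots,k-1\}$ and $\mathcal B = \{k,k+1,\dots,q-1\}$, regarded as sets of residue classes modulo $q$. Then neither $\mathcal A$ nor $\mathcal B$ is invariant under multiplication by $s$ (i.e. $s\mathcal A \neq \mathcal A$ and $s\mathcal B \neq \mathcal B$ in $\mathbb Z_q$). *)

theory Defs
  imports "HOL-Computational_Algebra.Primes"
begin

(* Residues mod q represented by their least nonnegative representatives 0..q-1.
   Multiplication of a set of residues by s modulo q. *)
definition mult_set_mod :: "nat \<Rightarrow> nat \<Rightarrow> nat set \<Rightarrow> nat set" where
  "mult_set_mod q s A = (\<lambda>a. (s * a) mod q) ` A"

end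

theory Submission
  imports Defs "HOL-Number_Theory.Cong"
begin

(* Suppose s maps {1..m} onto itself with 2 \<le> s and m \<le> q - 2. Then s = s\<cdot>1 lies in {1..m}, and
   s + m < q, since otherwise q - s = s\<cdot>a would force q | s(a+1) with a + 1 < q. Hence the
   least multiple s t exceeding m still satisfies s t \<le> m + s < q, so it is not reduced mod q
   and leaves {1..m}. The reflection y \<mapsto> q - y commutes with multiplication by s and
   exchanges {k..q-1} with {1..q-k}, so the second set reduces to the first. *)

lemma prime_not_dvd_mult_less:
  fixes q s y :: nat
  assumes "prime q" "0 < s" "s < q" "0 < y" "y < q"
  shows "\<not> q dvd s * y"
  using assms by (auto simp: prime_dvd_mult_iff dest: dvd_imp_le)

lemma mult_mod_reflect:
  fixes q s y :: nat
  assumes "y < q" and "\<not> q dvd s * y"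
  shows "(s * (q - y)) mod q = q - (s * y) mod q"
proof -
  let ?r = "(s * y) mod q"
  have r: "0 < ?r" "?r < q"
    using assms by (auto simp: dvd_eq_mod_eq_0 gr0I)
  have "[s * (q - y) + s * y = 0] (mod q)"
    using assms(1) by (simp add: cong_0_iff flip: add_mult_distrib2)
  moreover have "(q - ?r) + s * y = q * (s * y div q + 1)"
    using r(2) mod_less_eq_dividend[of "s * y" q] minus_mod_eq_mult_div[of "s * y" q]
    unfolding distrib_left by linarith
  then have "[(q - ?r) + s * y = 0] (mod q)"
    by (simp add: cong_0_iff)
  ultimately have "[s * (q - y) = q - ?r] (mod q)"
    by (meson cong_add_rcancel_nat cong_sym cong_trans)
  then show ?thesis
    using r by (simp add: cong_def)
qed

lemma mult_set_mod_reflect: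
  fixes q s :: nat
  assumes "prime q" and "s \<in> {1..<q}" and "A \<subseteq> {1..<q}"
  shows "mult_set_mod q s ((\<lambda>y. q - y) ` A) = (\<lambda>y. q - y) ` mult_set_mod q s A"
  unfolding mult_set_mod_def image_image
proof (rule image_cong)
  fix y assume "y \<in> A"
  with assms show "(s * (q - y)) mod q = q - (s * y) mod q"
    by (intro mult_mod_reflect prime_not_dvd_mult_less) auto
qed simp

lemma reflect_atLeastAtMost_nat:
  fixes q k :: nat
  assumes "1 \<le> k"
  shows "(\<lambda>y. q - y) ` {k..q - 1} = {1..q - k}"
proof
  show "{1..q - k} \<subseteq> (\<lambda>y. q - y) ` {k..q - 1}"
  proof
    fix x assume "x \<in> {1..q - k}"
    then have "q - x \<in> {k..q - 1}" and "x = q - (q - x)" by auto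
    then show "x \<in> (\<lambda>y. q - y) ` {k..q - 1}" by (rule rev_image_eqI)
  qed
qed (use assms in auto)

lemma mult_set_mod_initial_segment_neq:
  fixes q s m :: nat
  assumes q: "prime q" and s: "2 \<le> s" "s < q" and m: "1 \<le> m" "m + 2 \<le> q"
  shows "mult_set_mod q s {1..m} \<noteq> {1..m}"
proof
  assume inv: "mult_set_mod q s {1..m} = {1..m}"
  have mult_in: "(s * a) mod q \<in> {1..m}" if "a \<in> {1..m}" for a
    using inv that unfolding mult_set_mod_def by blast
  have "s \<le> m"
    using mult_in[of 1] m s by simp
  have "s + m < q"
  proof (rule ccontr)
    assume "\<not> s + m < q"
    then have "q - s \<in> mult_set_mod q s {1..m}"
      using inv s by auto
    then obtain a where a: "a \<in> {1..m}" "(s * a) mod q = q - s"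
      unfolding mult_set_mod_def by auto
    have "(s * (a + 1)) mod q = ((s * a) mod q + s) mod q"
      unfolding distrib_left mult_1_right by (rule mod_add_left_eq[symmetric])
    also have "\<dots> = 0"
      using a s by simp
    finally have "q dvd s * (a + 1)"
      by (simp add: dvd_eq_mod_eq_0)
    moreover have "\<not> q dvd s * (a + 1)"
      using a m s by (intro prime_not_dvd_mult_less[OF q]) auto
    ultimately show False by contradiction
  qed
  define t where "t = m div s + 1"
  have "m < s * t" "s * t \<le> m + s"
    using mult_div_mod_eq[of s m] mod_less_divisor[of s m] s
    unfolding t_def distrib_left by linarith+
  have "m div s < m"
    using s m by (intro div_less_dividend) auto
  then have "t \<in> {1..m}"
    unfolding t_def by simp
  then have "(s * t) mod q \<le> m"
    using mult_in by auto
  moreover have "(s * t) mod q = s * t"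
    using \<open>s * t \<le> m + s\<close> \<open>s + m < q\<close> by simp
  ultimately show False
    using \<open>m < s * t\<close> by simp
qed

theorem lemma3:
  fixes q s k :: nat
  assumes "prime q" and "q \<ge> 5"
    and "s \<in> {1..<q}" and "s \<noteq> 1"
    and "2 \<le> k" and "k \<le> q - 1"
  shows "mult_set_mod q s {1..k-1} \<noteq> {1..k-1} \<and> mult_set_mod q s {k..q-1} \<noteq> {k..q-1}"
proof
  have s: "2 \<le> s" "s < q"
    using assms(3,4) by auto
  show "mult_set_mod q s {1..k-1} \<noteq> {1..k-1}"
    using assms by (intro mult_set_mod_initial_segment_neq[OF assms(1) s]) auto
  have reflect: "(\<lambda>y. q - y) ` {k..q-1} = {1..q-k}"
    using assms(5) by (intro reflect_atLeastAtMost_nat) simp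
  show "mult_set_mod q s {k..q-1} \<noteq> {k..q-1}"
  proof
    assume inv: "mult_set_mod q s {k..q-1} = {k..q-1}"
    have "mult_set_mod q s {1..q-k} = (\<lambda>y. q - y) ` mult_set_mod q s {k..q-1}"
      unfolding reflect[symmetric] using assms by (intro mult_set_mod_reflect) auto
    also have "\<dots> = {1..q-k}"
      using inv reflect by simp
    finally have "mult_set_mod q s {1..q-k} = {1..q-k}" .
    moreover have "1 \<le> q - k" "q - k + 2 \<le> q"
      using assms by auto
    ultimately show False
      using mult_set_mod_initial_segment_neq[OF assms(1) s] by blast
  qed
qed

end
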